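(* Let $C$ and $C'$ be configurations of 2REG that are both convex, let $v\in C$, and let $t\ge0$ be an integer with $\mathrm{d}_C((0,0),v)\le t$. Then $C\equiv'_{t,v}C'$ if and only if $C'$ is a consistent extension of the subset $M(v,t,C)$ of $C$.
   Context: Positions are elements of $\mathbb{Z}^2$; with $\epsilon_0=(1,0)$, $\epsilon_1=(0,1)$, $\epsilon_2=(-1,0)$, $\epsilon_3=(0,-1)$, positions $p,p'$ are adjacent if $p'-p$ is one of the $\epsilon_i$. A path is a nonempty sequence of positions with consecutive positions adjacent. A configuration of 2REG is a finite set $C\subseteq\mathbb{Z}^2$ containing $(0,0)$ in which any two elements are joined by a path inside $C$. A set $X\subseteq\mathbb{Z}^2$ is convex if for any $v,v'\in X$, every shortest path between $v$ and $v'$ in $\mathbb{Z}^2$ lies in $X$. For $p,p'\in C$, $\mathrm{d}_C(p,p')$ is the number of steps of a shortest path from $p$ to $p'$ inside $C$. For $p\in C$, $\mathrm{bc}_C(p)=(b_0,\dots,b_3)\in\{0,1\}^4$ with $b_i=1$ iff $p+\epsilon_i\in C$. $\mathrm{ai}(v,t,C)$ is the symbol $\mathrm{Q}$ if $\mathrm{d}_C((0,0),v)>t$, and otherwise the triple $(t,v,\{(v',\mathrm{bc}_C(v')) : v'\in C,\ \mathrm{d}_C((0,0),v')+\mathrm{d}_C(v',v)\le t\})$. $C\equiv'_{t,v}C'$ means $v\in C\cap C'$ and $\mathrm{ai}(v,t,C)=\mathrm{ai}(v,t,C')\neq\mathrm{Q}$. $M(v,t,C)=\{v'\in C:\mathrm{d}_C((0,0),v')+\mathrm{d}_C(v',v)\le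 t\}$. $C'$ is a consistent extension of a subset $M$ of $C$ if $M\subseteq C'$ and $\mathrm{bc}_C(w)=\mathrm{bc}_{C'}(w)$ for all $w\in M$. *)

theory Defs
  imports Main
begin

type_synonym pos = "int \<times> int"

definition eps :: "nat \<Rightarrow> pos" where
  "eps i = (if i = 0 then (1, 0) else if i = 1 then (0, 1)
            else if i = 2 then (-1, 0) else (0, -1))"

definition padd :: "pos \<Rightarrow> pos \<Rightarrow> pos" where
  "padd p q = (fst p + fst q, snd p + snd q)"

definition adjacent :: "pos \<Rightarrow> pos \<Rightarrow> bool" where
  "adjacent p p' \<longleftrightarrow> (\<exists>i<4. p' = padd p (eps i))"

definition is_path :: "pos list \<Rightarrow> bool" where
  "is_path xs \<longleftrightarrow> xs \<noteq> [] \<and> (\<forall>i. Suc i < length xs \<longrightarrow> adjacent (xs ! i) (xs ! Suc i))"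

definition path_in :: "pos set \<Rightarrow> pos \<Rightarrow> pos \<Rightarrow> pos list \<Rightarrow> bool" where
  "path_in S p q xs \<longleftrightarrow> is_path xs \<and> hd xs = p \<and> last xs = q \<and> set xs \<subseteq> S"

definition dist_in :: "pos set \<Rightarrow> pos \<Rightarrow> pos \<Rightarrow> nat" where
  "dist_in S p q = (LEAST n. \<exists>xs. path_in S p q xs \<and> length xs = Suc n)"

definition configuration :: "pos set \<Rightarrow> bool" where
  "configuration C \<longleftrightarrow> finite C \<and> (0, 0) \<in> C \<and>
     (\<forall>p\<in>C. \<forall>q\<in>C. \<exists>xs. path_in C p q xs)"

definition convex :: "pos set \<Rightarrow> bool" where
  "convex X \<longleftrightarrow> (\<forall>v\<in>X. \<forall>v'\<in>X. \<forall>xs.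
     path_in UNIV v v' xs \<and> length xs = Suc (dist_in UNIV v v') \<longrightarrow> set xs \<subseteq> X)"

definition bc :: "pos set \<Rightarrow> pos \<Rightarrow> bool list" where
  "bc C p = map (\<lambda>i. padd p (eps i) \<in> C) [0..<4]"

datatype ai_val = Q | AI nat pos "(pos \<times> bool list) set"

definition ai :: "pos \<Rightarrow> nat \<Rightarrow> pos set \<Rightarrow> ai_val" where
  "ai v t C = (if dist_in C (0, 0) v > t then Q
     else AI t v {(v', bc C v') | v'. v' \<in> C \<and> dist_in C (0, 0) v' + dist_in C v' v \<le> t})"

definition equiv' :: "pos set \<Rightarrow> nat \<Rightarrow> pos \<Rightarrow> pos set \<Rightarrow> bool" where
  "equiv' C t v C' \<longleftrightarrow> v \<in> C \<and> v \<in> C' \<and> ai v t C = ai v t C' \<and> ai v t C \<noteq> Q"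

definition Mset :: "pos \<Rightarrow> nat \<Rightarrow> pos set \<Rightarrow> pos set" where
  "Mset v t C = {v' \<in> C. dist_in C (0, 0) v' + dist_in C v' v \<le> t}"

definition consistent_extension :: "pos set \<Rightarrow> pos set \<Rightarrow> pos set \<Rightarrow> bool" where
  "consistent_extension C' M C \<longleftrightarrow> M \<subseteq> C' \<and> (\<forall>w\<in>M. bc C w = bc C' w)"

end

theory Submission
  imports Defs
begin

text \<open>In a convex configuration the intrinsic distance is the taxicab distance, so
  \<open>M(v,t,C)\<close> is \<open>C\<close> cut down to the taxicab ellipse \<open>E = {w. |w| + |w - v| \<le> t}\<close>.
  If \<open>C'\<close> is a consistent extension of \<open>C \<inter> E\<close>, then \<open>C' \<inter> E \<subseteq> C\<close> by induction on \<open>|w|\<close>: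
  convexity of \<open>C'\<close> gives a neighbour \<open>u \<in> C' \<inter> E\<close> of \<open>w\<close> closer to the origin, \<open>u \<in> C\<close>
  by induction, and as \<open>C\<close> and \<open>C'\<close> have the same border configuration at \<open>u\<close>, also \<open>w \<in> C\<close>.
  So \<open>C\<close> and \<open>C'\<close> cut the same set out of \<open>E\<close>, with the same border configurations, which
  is what equality of the \<open>ai\<close>-values says. The converse needs no convexity.\<close>

definition taxi_dist :: "pos \<Rightarrow> pos \<Rightarrow> nat" where
  "taxi_dist p q = nat (\<bar>fst p - fst q\<bar> + \<bar>snd p - snd q\<bar>)"

lemma taxi_dist_commute: "taxi_dist p q = taxi_dist q p"
  by (simp add: taxi_dist_def abs_minus_commute)

lemma of_nat_taxi_dist: "int (taxi_dist p q) = \<bar>fst p - fst q\<bar> + \<bar>snd p - snd q\<bar>"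
  by (simp add: taxi_dist_def)

lemma taxi_dist_triangle: "taxi_dist p r \<le> taxi_dist p q + taxi_dist q r"
proof -
  have "int (taxi_dist p r) \<le> int (taxi_dist p q) + int (taxi_dist q r)"
    unfolding of_nat_taxi_dist by (smt (verit))
  then show ?thesis
    by linarith
qed

lemma taxi_dist_self [simp]: "taxi_dist p p = 0"
  by (simp add: taxi_dist_def)

lemma taxi_dist_eq_0_iff [simp]: "taxi_dist p q = 0 \<longleftrightarrow> p = q"
  by (cases p; cases q) (auto simp: taxi_dist_def)

lemma adjacent_iff_taxi_dist: "adjacent p q \<longleftrightarrow> taxi_dist p q = 1"
proof
  assume "adjacent p q"
  then obtain i where "i < 4" "q = padd p (eps i)"
    unfolding adjacent_def by blast
  then show "taxi_dist p q = 1"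
    by (auto simp: taxi_dist_def padd_def eps_def eval_nat_numeral less_Suc_eq)
next
  obtain a b c d where pq: "p = (a, b)" "q = (c, d)"
    by fastforce
  assume "taxi_dist p q = 1"
  then have "\<bar>a - c\<bar> + \<bar>b - d\<bar> = 1"
    using of_nat_taxi_dist[of p q] by (simp add: pq)
  then have "q = padd p (eps 0) \<or> q = padd p (eps 1) \<or> q = padd p (eps 2) \<or> q = padd p (eps 3)"
    by (simp add: pq padd_def eps_def) arith
  then show "adjacent p q"
    unfolding adjacent_def by (elim disjE) (rule exI, force)+
qed

lemma adjacent_closer_exists:
  assumes "p \<noteq> q"
  shows "\<exists>u. adjacent p u \<and> Suc (taxi_dist u q) = taxi_dist p q"
proof -
  obtain a b c d where pq: "p = (a, b)" "q = (c, d)"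
    by fastforce
  define u :: pos where "u = (if a < c then (a + 1, b) else if a > c then (a - 1, b)
      else if b < d then (a, b + 1) else (a, b - 1))"
  have "int (taxi_dist p u) = 1" "int (taxi_dist u q) + 1 = int (taxi_dist p q)"
    using assms unfolding of_nat_taxi_dist by (auto simp: u_def pq)
  then show ?thesis
    using adjacent_iff_taxi_dist by (metis of_nat_1 of_nat_eq_iff of_nat_Suc add.commute)
qed

lemma is_path_Cons_Cons: "is_path (x # y # ys) \<longleftrightarrow> adjacent x y \<and> is_path (y # ys)"
  unfolding is_path_def by (auto simp: nth_Cons split: nat.splits)

lemma path_in_Cons:
  assumes "path_in S u q xs" "adjacent p u" "p \<in> S"
  shows "path_in S p q (p # xs)"
proof -
  obtain ys where "xs = u # ys"
    using assms(1) by (cases xs) (auto simp: path_in_def is_path_def)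
  with assms show ?thesis
    by (auto simp: path_in_def is_path_Cons_Cons)
qed

lemma taxi_dist_le_path_length:
  assumes "is_path xs"
  shows "Suc (taxi_dist (hd xs) (last xs)) \<le> length xs"
  using assms
proof (induction xs rule: induct_list012)
  case (3 x y ys)
  then have "adjacent x y" "is_path (y # ys)"
    by (simp_all add: is_path_Cons_Cons)
  then show ?case
    using "3.IH"(2) taxi_dist_triangle[of x "last (y # ys)" y]
    by (simp add: adjacent_iff_taxi_dist)
qed (simp_all add: is_path_def)

lemma shortest_path_exists: "\<exists>xs. path_in UNIV p q xs \<and> length xs = Suc (taxi_dist p q)"
proof (induction "taxi_dist p q" arbitrary: p)
  case 0
  then show ?case
    by (auto simp: path_in_def is_path_def intro!: exI[of _ "[p]"])
next
  case (Suc n)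
  then have "p \<noteq> q"
    by fastforce
  then obtain u where u: "adjacent p u" "Suc (taxi_dist u q) = taxi_dist p q"
    using adjacent_closer_exists by blast
  moreover obtain xs where "path_in UNIV u q xs" "length xs = Suc (taxi_dist u q)"
    using Suc.hyps u(2) by (metis Suc_inject prod.collapse)
  ultimately show ?case
    using path_in_Cons by fastforce
qed

lemma dist_in_eq_taxi_dist:
  assumes "path_in S p q xs" "length xs = Suc (taxi_dist p q)"
  shows "dist_in S p q = taxi_dist p q"
  unfolding dist_in_def
proof (rule Least_equality)
  fix n
  assume "\<exists>ys. path_in S p q ys \<and> length ys = Suc n"
  then show "taxi_dist p q \<le> n"
    using taxi_dist_le_path_length by (fastforce simp: path_in_def)
qed (use assms in blast)

lemma dist_in_self: "p \<in> S \<Longrightarrow> dist_in S p p = 0"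
  unfolding dist_in_def by (rule Least_eq_0) (auto simp: path_in_def is_path_def intro!: exI[of _ "[p]"])

lemma dist_in_UNIV: "dist_in UNIV p q = taxi_dist p q"
  using shortest_path_exists dist_in_eq_taxi_dist by blast

lemma convex_shortest_path_subset:
  assumes "convex C" "p \<in> C" "q \<in> C" "path_in UNIV p q xs" "length xs = Suc (taxi_dist p q)"
  shows "set xs \<subseteq> C"
  using assms unfolding convex_def dist_in_UNIV by blast

lemma dist_in_convex:
  assumes "convex C" "p \<in> C" "q \<in> C"
  shows "dist_in C p q = taxi_dist p q"
proof -
  obtain xs where "path_in UNIV p q xs" "length xs = Suc (taxi_dist p q)"
    using shortest_path_exists by blast
  moreover from this have "set xs \<subseteq> C"
    using assms convex_shortest_path_subset by blast
  ultimately show ?thesis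
    by (intro dist_in_eq_taxi_dist) (auto simp: path_in_def)
qed

lemma convex_adjacent_closer_exists:
  assumes "convex C" "p \<in> C" "q \<in> C" "p \<noteq> q"
  shows "\<exists>u\<in>C. adjacent p u \<and> Suc (taxi_dist u q) = taxi_dist p q"
proof -
  obtain u where u: "adjacent p u" "Suc (taxi_dist u q) = taxi_dist p q"
    using adjacent_closer_exists assms(4) by blast
  obtain xs where xs: "path_in UNIV u q xs" "length xs = Suc (taxi_dist u q)"
    using shortest_path_exists by blast
  then have "path_in UNIV p q (p # xs)" "length (p # xs) = Suc (taxi_dist p q)"
    using u path_in_Cons by auto
  then have "set (p # xs) \<subseteq> C"
    using convex_shortest_path_subset[OF assms(1-3)] by blast
  moreover have "u \<in> set xs"
    using xs(1) by (cases xs) (auto simp: path_in_def is_path_def)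
  ultimately have "u \<in> C"
    by auto
  with u show ?thesis
    by blast
qed

definition taxi_ellipse :: "pos \<Rightarrow> nat \<Rightarrow> pos set" where
  "taxi_ellipse v t = {w. taxi_dist (0, 0) w + taxi_dist w v \<le> t}"

lemma taxi_ellipse_step_towards_origin:
  assumes "w \<in> taxi_ellipse v t" "adjacent w u" "Suc (taxi_dist u (0, 0)) = taxi_dist w (0, 0)"
  shows "u \<in> taxi_ellipse v t"
proof -
  have "taxi_dist u v \<le> Suc (taxi_dist w v)"
    using assms(2) taxi_dist_triangle[of u v w] by (simp add: adjacent_iff_taxi_dist taxi_dist_commute)
  with assms show ?thesis
    by (simp add: taxi_ellipse_def taxi_dist_commute)
qed

lemma Mset_convex:
  assumes "convex C" "(0, 0) \<in> C" "v \<in> C"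
  shows "Mset v t C = C \<inter> taxi_ellipse v t"
  using assms by (auto simp: Mset_def taxi_ellipse_def dist_in_convex)

lemma bc_eq_imp_adjacent_mem_iff:
  assumes "bc C u = bc C' u" "adjacent u w"
  shows "w \<in> C \<longleftrightarrow> w \<in> C'"
proof -
  obtain i where "i < 4" "w = padd u (eps i)"
    using assms(2) unfolding adjacent_def by blast
  with assms(1) show ?thesis
    unfolding bc_def by (metis (no_types, lifting) diff_zero length_upt nth_map nth_upt add_0)
qed

lemma consistent_extension_taxi_ellipse_subset:
  assumes "convex C'" "(0, 0) \<in> C" "(0, 0) \<in> C'"
    and "consistent_extension C' (C \<inter> taxi_ellipse v t) C"
  shows "C' \<inter> taxi_ellipse v t \<subseteq> C"
proof
  fix w
  show "w \<in> C' \<inter> taxi_ellipse v t \<Longrightarrow> w \<in> C"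
  proof (induction w rule: measure_induct_rule[where f = "\<lambda>w. taxi_dist w (0, 0)"])
    case (less w)
    show ?case
    proof (cases "w = (0, 0)")
      case False
      then obtain u where u: "u \<in> C'" "adjacent w u" "Suc (taxi_dist u (0, 0)) = taxi_dist w (0, 0)"
        using convex_adjacent_closer_exists[OF assms(1) _ assms(3)] less.prems by blast
      then have "u \<in> taxi_ellipse v t"
        using less.prems taxi_ellipse_step_towards_origin by blast
      with u less.IH have "u \<in> C \<inter> taxi_ellipse v t"
        by auto
      then have "bc C u = bc C' u"
        using assms(4) by (simp add: consistent_extension_def)
      moreover have "adjacent u w"
        using u(2) by (simp add: adjacent_iff_taxi_dist taxi_dist_commute)
      ultimately show ?thesis
        using less.prems bc_eq_imp_adjacent_mem_iff by blast
    qed (use assms(2) in simp)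
  qed
qed

lemma image_graph_eq_iff:
  "(\<lambda>x. (x, f x)) ` A = (\<lambda>x. (x, g x)) ` B \<longleftrightarrow> A = B \<and> (\<forall>x\<in>A. f x = g x)"
  by (auto simp: image_iff)

lemma ai_eq:
  "ai v t C = (if t < dist_in C (0, 0) v then Q else AI t v ((\<lambda>w. (w, bc C w)) ` Mset v t C))"
  unfolding ai_def Mset_def by auto

lemma equiv'_iff:
  "equiv' C t v C' \<longleftrightarrow> v \<in> C \<and> v \<in> C' \<and> dist_in C (0, 0) v \<le> t \<and> dist_in C' (0, 0) v \<le> t
     \<and> Mset v t C = Mset v t C' \<and> (\<forall>w\<in>Mset v t C. bc C w = bc C' w)"
  unfolding equiv'_def ai_eq by (auto simp: image_graph_eq_iff not_less)

theorem theorem2: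
  fixes C C' :: "pos set" and v :: pos and t :: nat
  assumes "configuration C" and "configuration C'"
    and "convex C" and "convex C'"
    and "v \<in> C" and "dist_in C (0, 0) v \<le> t"
  shows "equiv' C t v C' \<longleftrightarrow> consistent_extension C' (Mset v t C) C"
proof
  assume "equiv' C t v C'"
  then show "consistent_extension C' (Mset v t C) C"
    unfolding equiv'_iff consistent_extension_def by (auto simp: Mset_def)
next
  assume ext: "consistent_extension C' (Mset v t C) C"
  have origin: "(0, 0) \<in> C" "(0, 0) \<in> C'"
    using assms(1,2) by (simp_all add: configuration_def)
  have M: "Mset v t C = C \<inter> taxi_ellipse v t"
    using Mset_convex assms(3,5) origin(1) by blast
  have "v \<in> Mset v t C"
    using assms(5,6) by (simp add: Mset_def dist_in_self)
  then have "v \<in> C'"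
    using ext by (auto simp: consistent_extension_def)
  have "C' \<inter> taxi_ellipse v t \<subseteq> C"
    using consistent_extension_taxi_ellipse_subset assms(4) origin ext M by simp
  with ext have "Mset v t C' = Mset v t C"
    using Mset_convex[OF assms(4) origin(2) \<open>v \<in> C'\<close>] M by (auto simp: consistent_extension_def)
  moreover have "dist_in C' (0, 0) v = dist_in C (0, 0) v"
    using dist_in_convex assms(3-5) origin \<open>v \<in> C'\<close> by simp
  ultimately show "equiv' C t v C'"
    using ext assms(5,6) \<open>v \<in> C'\<close> by (simp add: equiv'_iff consistent_extension_def)
qed

end
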